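(* Assume $n_1\equiv\pm1\pmod 8$ and $n_2\equiv\pm1\pmod 8$. Then $-1\in D_1$ if and only if $n_2\equiv -1\pmod 8$.
   Context: Let $n_1,n_2$ be distinct odd primes, $n=n_1n_2$, $d=\gcd(n_1-1,n_2-1)$ and $e=(n_1-1)(n_2-1)/d$. Let $g_1,g_2$ be primitive roots modulo $n_1,n_2$ respectively, let $g$ be the integer modulo $n$ with $g\equiv g_1 \pmod{n_1}$, $g\equiv g_2\pmod{n_2}$, and let $\nu$ be the integer modulo $n$ with $\nu\equiv g\pmod{n_1}$, $\nu\equiv 1\pmod{n_2}$. It is known that every element of $\mathbb{Z}_n^*$ can be written uniquely as $g^s\nu^i$ with $0\le s\le e-1$, $0\le i\le d-1$. Define $D_1=\{g^{2s+1}\nu^i: 0\le s\le (e-2)/2,\ 0\le i\le d-1\}$. *)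

theory Defs
  imports "HOL-Number_Theory.Number_Theory"
begin

(* Elements of Z_n^* are represented by their least nonnegative residues in {0..<n}. *)
definition dD :: "nat \<Rightarrow> nat \<Rightarrow> nat" where
  "dD n1 n2 = gcd (n1 - 1) (n2 - 1)"

definition eE :: "nat \<Rightarrow> nat \<Rightarrow> nat" where
  "eE n1 n2 = (n1 - 1) * (n2 - 1) div dD n1 n2"

definition D1 :: "nat \<Rightarrow> nat \<Rightarrow> nat \<Rightarrow> nat \<Rightarrow> nat set" where
  "D1 n1 n2 g \<nu> = {(g ^ (2 * s + 1) * \<nu> ^ i) mod (n1 * n2) | s i.
      s \<le> (eE n1 n2 - 2) div 2 \<and> i \<le> dD n1 n2 - 1}"

end

theory Submission
  imports Defs
begin

(* Write n = n1 n2, a = n1 - 1 and b = n2 - 1, so that d = gcd a b and e = lcm a b.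
   Reducing modulo n1 and n2, the element g^t nu^i becomes g1^(t+i) and g2^t, and for a
   primitive root h of an odd prime p one has h^u = -1 (mod p) exactly when
   u = (p-1)/2 (mod p-1).  By the Chinese remainder theorem, -1 = g^t nu^i (mod n) is thus
   equivalent to the pair of exponent congruences
       t + i = a/2 (mod a),      t = b/2 (mod b).
   Membership of -1 in D1 asks for such a pair with t odd, t < e and i < d.  The second
   congruence forces t = b/2 (mod 2), so an odd t exists only if b/2 is odd; conversely,
   if b/2 is odd a solution is built by choosing i to absorb the residue of a/2 - b/2
   modulo d and solving the remaining linear congruence modulo a.  Finally, for
   n2 = +-1 (mod 8), the number (n2-1)/2 is odd exactly when n2 = 7 (mod 8). *)

lemma primroot_power_cong_iff:
  fixes m h u v :: nat
  assumes "residue_primroot m h"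
  shows "[h ^ u = h ^ v] (mod m) \<longleftrightarrow> [u = v] (mod totient m)"
  using assms order_divides_expdiff[of m h u v] by (simp add: residue_primroot_def)

lemma primroot_half_power:
  fixes p h :: nat
  assumes p: "prime p" "odd p" and root: "residue_primroot p h"
  shows "[h ^ ((p - 1) div 2) = p - 1] (mod p)"
proof -
  have p3: "p \<ge> 3" using p prime_ge_2_nat[of p] by (cases "p = 2") auto
  have ord: "ord p h = p - 1" and cop: "coprime p h"
    using root p by (simp_all add: residue_primroot_def totient_prime)
  define x where "x = h ^ ((p - 1) div 2)"
  have "(p - 1) div 2 + (p - 1) div 2 = p - 1" using p(2) by presburger
  hence "x * x = h ^ (p - 1)" unfolding x_def by (metis power_add)
  hence "[x * x = 1] (mod p)" using ord_divides[of h "p - 1" p] ord by simp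
  hence sq: "[int x * int x = 1] (mod int p)" by (metis cong_int_iff of_nat_1 of_nat_mult)
  have "h > 0" using cop p3 by (cases "h = 0") auto
  hence "int x > 0" by (simp add: x_def)
  hence "[int x = 1] (mod int p) \<or> [int x = - 1] (mod int p)"
    using cong_square[OF _ _ sq] p(1) by simp
  moreover have "\<not> [x = 1] (mod p)"
    using ord_minimal[of "(p - 1) div 2" p h] ord p3 by (auto simp: x_def)
  ultimately have "[int x = - 1] (mod int p)" by (metis cong_int_iff of_nat_1)
  moreover have "[- 1 = int (p - 1)] (mod int p)"
    using p3 by (simp add: cong_iff_dvd_diff of_nat_diff)
  ultimately show ?thesis unfolding x_def by (metis cong_int_iff cong_trans)
qed

lemma primroot_power_eq_minus_one_iff:
  fixes p h u :: nat
  assumes "prime p" "odd p" "residue_primroot p h"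
  shows "[h ^ u = p - 1] (mod p) \<longleftrightarrow> [u = (p - 1) div 2] (mod (p - 1))"
proof -
  have "[h ^ u = p - 1] (mod p) \<longleftrightarrow> [h ^ u = h ^ ((p - 1) div 2)] (mod p)"
    using primroot_half_power[OF assms] by (meson cong_sym cong_trans)
  also have "\<dots> \<longleftrightarrow> [u = (p - 1) div 2] (mod (p - 1))"
    using primroot_power_cong_iff[OF assms(3)] assms(1) by (simp add: totient_prime)
  finally show ?thesis .
qed

lemma cong_minus_one_mult_iff:
  fixes m n x :: nat
  assumes "coprime m n" "m > 0" "n > 0"
  shows "[x = m * n - 1] (mod m * n) \<longleftrightarrow> [x = m - 1] (mod m) \<and> [x = n - 1] (mod n)"
proof -
  have "m * n - 1 = (n - 1) * m + (m - 1)"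
    using assms(2,3) by (simp add: algebra_simps diff_mult_distrib)
  hence m: "[m * n - 1 = m - 1] (mod m)" by (simp add: cong_def)
  have "m * n - 1 = (m - 1) * n + (n - 1)"
    using assms(2,3) by (simp add: algebra_simps diff_mult_distrib)
  hence n: "[m * n - 1 = n - 1] (mod n)" by (simp add: cong_def)
  show ?thesis
  proof
    assume "[x = m * n - 1] (mod m * n)"
    thus "[x = m - 1] (mod m) \<and> [x = n - 1] (mod n)"
      using m n by (metis cong_modulus_mult_nat cong_trans mult.commute)
  next
    assume "[x = m - 1] (mod m) \<and> [x = n - 1] (mod n)"
    thus "[x = m * n - 1] (mod m * n)"
      using m n assms(1) by (metis cong_sym cong_trans coprime_cong_mult_nat)
  qed
qed

text \<open>If b/2 is odd, the exponent congruences have a solution (t, i) with t odd, t below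
  lcm a b and i below gcd a b: the index i absorbs a/2 - b/2 modulo gcd a b, and the
  remaining congruence b x = (a/2 - b/2 - i) (mod a) is then solvable.\<close>
lemma exponent_system_solvable:
  fixes a b :: nat
  assumes "even b" "a > 0" "b > 0" and odd_half: "odd (b div 2)"
  shows "\<exists>t i. odd t \<and> t < lcm a b \<and> i < gcd a b
           \<and> [t + i = a div 2] (mod a) \<and> [t = b div 2] (mod b)"
proof -
  define c where "c = a div 2 + a * b - b div 2"
  have "b \<le> a * b" using assms(2) by simp
  hence "b div 2 \<le> a * b" using div_le_dividend[of b 2] by linarith
  hence c: "c + b div 2 = a div 2 + a * b" unfolding c_def by linarith
  define i where "i = c mod gcd a b"
  have "gcd b a dvd c - i" unfolding i_def by (simp add: gcd.commute minus_mod_eq_mult_div)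
  then obtain x where x: "[b * x = c - i] (mod a)" using cong_solve_dvd_nat by blast
  define t where "t = (b * x + b div 2) mod lcm a b"
  have t: "[t = b * x + b div 2] (mod lcm a b)" unfolding t_def by simp
  have ta: "[t = b * x + b div 2] (mod a)"
    using cong_dvd_modulus_nat[OF t dvd_lcm1] .
  have "[t = b * x + b div 2] (mod b)"
    using cong_dvd_modulus_nat[OF t dvd_lcm2] .
  also have "[b * x + b div 2 = b div 2] (mod b)" by (simp add: cong_def)
  finally have tb: "[t = b div 2] (mod b)" .
  have "[t + i = (b * x + b div 2) + i] (mod a)" using ta by (rule cong_add) simp
  also have "[(b * x + b div 2) + i = (c - i) + b div 2 + i] (mod a)"
    using x by (intro cong_add) simp_all
  also have "(c - i) + b div 2 + i = a div 2 + a * b"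
    using c mod_less_eq_dividend[of c "gcd a b"] unfolding i_def by linarith
  also have "[a div 2 + a * b = a div 2] (mod a)" by (simp add: cong_def)
  finally have ti: "[t + i = a div 2] (mod a)" .
  have "[t = b div 2] (mod 2)" using tb assms(1) by (rule cong_dvd_modulus_nat)
  hence "odd t" using odd_half by (simp add: cong_def odd_iff_mod_2_eq_one)
  moreover have "t < lcm a b" "i < gcd a b"
    using assms(2,3) by (simp_all add: t_def i_def lcm_pos_nat)
  ultimately show ?thesis using ti tb by blast
qed

text \<open>The exponent congruences admit a solution with t odd (and t, i in range) exactly when
  b/2 is odd; necessity holds because t = b/2 (mod b) forces t = b/2 (mod 2).\<close>
lemma exponent_system_solvable_iff:
  fixes a b :: nat
  assumes "even b" "a > 0" "b > 0"
  shows "(\<exists>t i. odd t \<and> t < lcm a b \<and> i < gcd a b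
           \<and> [t + i = a div 2] (mod a) \<and> [t = b div 2] (mod b)) \<longleftrightarrow> odd (b div 2)"
proof
  assume "\<exists>t i. odd t \<and> t < lcm a b \<and> i < gcd a b
           \<and> [t + i = a div 2] (mod a) \<and> [t = b div 2] (mod b)"
  then obtain t where "odd t" "[t = b div 2] (mod b)" by blast
  moreover from this(2) have "[t = b div 2] (mod 2)" using assms(1) by (rule cong_dvd_modulus_nat)
  ultimately show "odd (b div 2)" by (simp add: cong_def odd_iff_mod_2_eq_one)
qed (use exponent_system_solvable assms in blast)

text \<open>The definition of D1 rephrased with the odd exponent t = 2s + 1: the bound
  s \<le> (e - 2)/2 says t < e because e is even and positive.\<close>
lemma D1_iff_odd_exponent:
  assumes "even (eE n1 n2)" "eE n1 n2 > 0" "dD n1 n2 > 0"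
  shows "x \<in> D1 n1 n2 g \<nu> \<longleftrightarrow> (\<exists>t i. odd t \<and> t < eE n1 n2 \<and> i < dD n1 n2
           \<and> x = (g ^ t * \<nu> ^ i) mod (n1 * n2))"
proof -
  have s: "s \<le> (eE n1 n2 - 2) div 2 \<longleftrightarrow> 2 * s + 1 < eE n1 n2" for s
    using assms(1,2) by presburger
  have i: "i \<le> dD n1 n2 - 1 \<longleftrightarrow> i < dD n1 n2" for i using assms(3) by linarith
  show ?thesis
  proof
    assume "x \<in> D1 n1 n2 g \<nu>"
    then obtain s i where x: "x = (g ^ (2 * s + 1) * \<nu> ^ i) mod (n1 * n2)"
      and "s \<le> (eE n1 n2 - 2) div 2" "i \<le> dD n1 n2 - 1"
      unfolding D1_def by blast
    hence "odd (2 * s + 1)" "2 * s + 1 < eE n1 n2" "i < dD n1 n2" using s i by simp_all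
    with x show "\<exists>t i. odd t \<and> t < eE n1 n2 \<and> i < dD n1 n2
           \<and> x = (g ^ t * \<nu> ^ i) mod (n1 * n2)" by blast
  next
    assume "\<exists>t i. odd t \<and> t < eE n1 n2 \<and> i < dD n1 n2
           \<and> x = (g ^ t * \<nu> ^ i) mod (n1 * n2)"
    then obtain t i where t: "odd t" "t < eE n1 n2" and "i < dD n1 n2"
      and x: "x = (g ^ t * \<nu> ^ i) mod (n1 * n2)" by blast
    from t(1) obtain s where "t = 2 * s + 1" by (rule oddE)
    with t(2) x \<open>i < dD n1 n2\<close> have "x = (g ^ (2 * s + 1) * \<nu> ^ i) mod (n1 * n2)"
      "s \<le> (eE n1 n2 - 2) div 2" "i \<le> dD n1 n2 - 1" using s i by simp_all
    thus "x \<in> D1 n1 n2 g \<nu>" unfolding D1_def by blast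
  qed
qed

lemma power_eq_minus_one_iff:
  fixes n1 n2 g1 g2 g \<nu> t i :: nat
  assumes p: "prime n1" "prime n2" "odd n1" "odd n2" "n1 \<noteq> n2"
    and roots: "residue_primroot n1 g1" "residue_primroot n2 g2"
    and g: "[g = g1] (mod n1)" "[g = g2] (mod n2)"
    and \<nu>: "[\<nu> = g] (mod n1)" "[\<nu> = 1] (mod n2)"
  shows "[g ^ t * \<nu> ^ i = n1 * n2 - 1] (mod n1 * n2) \<longleftrightarrow>
           [t + i = (n1 - 1) div 2] (mod (n1 - 1)) \<and> [t = (n2 - 1) div 2] (mod (n2 - 1))"
proof -
  have "[g ^ t * \<nu> ^ i = g1 ^ t * g1 ^ i] (mod n1)"
    using g(1) \<nu>(1) by (intro cong_mult cong_pow) (auto intro: cong_trans)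
  hence mod1: "[g ^ t * \<nu> ^ i = g1 ^ (t + i)] (mod n1)" by (simp add: power_add)
  have "[g ^ t * \<nu> ^ i = g2 ^ t * 1 ^ i] (mod n2)"
    using g(2) \<nu>(2) by (intro cong_mult cong_pow)
  hence mod2: "[g ^ t * \<nu> ^ i = g2 ^ t] (mod n2)" by simp
  have "coprime n1 n2" using p by (simp add: primes_coprime)
  moreover have "n1 > 0" "n2 > 0" using p(1,2) by (simp_all add: prime_gt_0_nat)
  ultimately have "[g ^ t * \<nu> ^ i = n1 * n2 - 1] (mod n1 * n2) \<longleftrightarrow>
      [g1 ^ (t + i) = n1 - 1] (mod n1) \<and> [g2 ^ t = n2 - 1] (mod n2)"
    using cong_minus_one_mult_iff mod1 mod2 by (meson cong_sym cong_trans)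
  thus ?thesis
    using primroot_power_eq_minus_one_iff[OF p(1,3) roots(1)]
          primroot_power_eq_minus_one_iff[OF p(2,4) roots(2)] by simp
qed

theorem mainTheorem10:
  fixes n1 n2 g1 g2 g \<nu> :: nat
  assumes "prime n1" and "prime n2" and "odd n1" and "odd n2" and "n1 \<noteq> n2"
    and "residue_primroot n1 g1" and "residue_primroot n2 g2"
    and "[g = g1] (mod n1)" and "[g = g2] (mod n2)"
    and "[\<nu> = g] (mod n1)" and "[\<nu> = 1] (mod n2)"
    and "n1 mod 8 = 1 \<or> n1 mod 8 = 7"
    and "n2 mod 8 = 1 \<or> n2 mod 8 = 7"
  shows "(n1 * n2 - 1) \<in> D1 n1 n2 g \<nu> \<longleftrightarrow> n2 mod 8 = 7"
proof -
  define a b where "a = n1 - 1" and "b = n2 - 1"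
  have "n1 \<ge> 2" "n2 \<ge> 2" using assms(1,2) by (simp_all add: prime_ge_2_nat)
  hence ab: "even a" "even b" "a > 0" "b > 0"
    using assms(3,4) unfolding a_def b_def by presburger+
  have d: "dD n1 n2 = gcd a b" and e: "eE n1 n2 = lcm a b"
    by (simp_all add: dD_def eE_def a_def b_def lcm_nat_def)
  have "even (lcm a b)" using ab(2) dvd_lcm2 dvd_trans by blast
  moreover have "lcm a b > 0" "gcd a b > 0" using ab(3,4) by (simp_all add: lcm_pos_nat)
  moreover have "n1 * n2 - 1 = x mod (n1 * n2) \<longleftrightarrow> [x = n1 * n2 - 1] (mod n1 * n2)"
    for x :: nat using \<open>n1 \<ge> 2\<close> \<open>n2 \<ge> 2\<close> by (auto simp: cong_def)
  ultimately have "(n1 * n2 - 1) \<in> D1 n1 n2 g \<nu> \<longleftrightarrow> (\<exists>t i. odd t \<and> t < lcm a b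
           \<and> i < gcd a b \<and> [g ^ t * \<nu> ^ i = n1 * n2 - 1] (mod n1 * n2))"
    using D1_iff_odd_exponent[of n1 n2] d e by simp
  also have "\<dots> \<longleftrightarrow> odd (b div 2)"
    using power_eq_minus_one_iff[OF assms(1-11)] exponent_system_solvable_iff[OF ab(2-4)]
    unfolding a_def b_def by simp
  also have "\<dots> \<longleftrightarrow> n2 mod 8 = 7"
    using assms(13) unfolding b_def by presburger
  finally show ?thesis .
qed

end
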